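(* Let $n\in\mathbb{Z}\setminus\{0\}$, $r_2\in\mathbb{R}$, $d\in\mathbb{N}$, and let $P\in\mathbb{Z}$ be sufficiently negative (depending on $r_2$). Consider $$S=\sum_{c\in\mathbb{N}} c^{r_2}\sum_{\substack{a,b\in\mathbb{Z}\setminus\{0\}\\ ad-bc=n}} (bc)^{P}.$$ If $d\mid n$, then $$S=(-1)^{P+1}n^{P}\sigma_{r_2}(n)+2\,d^{P}\,\delta_{2\mid P}\,\zeta(-P)\,\zeta(-r_2-P)\prod_{p\mid d}\Big(1+(1-p^{P})\big(p^{r_2}+p^{2r_2}+\cdots+p^{v_p(d)\,r_2}\big)\Big).$$ If $d\nmid n$, then $$S=(-1)^{P+1}n^{P}\sigma_{r_2}(n)+d^{\,r_2+2P}\sum_{\substack{0<c'\le d\\ \gcd(c',d)\mid n}}\frac{\zeta\!\left(-r_2-P,\tfrac{c'}{d}\right)}{\gcd(c',d)^{P}}\sum_{m\in\mathbb{Z}}\big(m+u_{c',d}\big)^{P}.$$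
   Context: For $m\in\mathbb{Z}\setminus\{0\}$ and $\nu\in\mathbb{C}$, $\sigma_\nu(m)=\sum_{e\in\mathbb{N},\,e\mid m}e^{\nu}$. $\zeta$ is the Riemann zeta function and $\zeta(s,a)=\sum_{j\ge0}(j+a)^{-s}$ the Hurwitz zeta function. $\delta_{2\mid P}$ is $1$ if $P$ is even and $0$ otherwise. The product runs over primes $p$ dividing $d$ and $v_p(d)$ is the $p$-adic valuation. For $c,d\in\mathbb{N}$ with $\gcd(c,d)\mid n$: $B=\{b\in\mathbb{Z}:\exists a\in\mathbb{Z},\ ad-bc=n\}$, $b^*$ is an element of $B$ of minimal absolute value, and $u_{c,d}=b^*\gcd(c,d)/d$ (choice of $b^*$ changes $u_{c,d}$ only by an integer, not affecting the sums over $m\in\mathbb{Z}$). *)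

theory Defs
  imports "HOL-Analysis.Analysis" "HOL-Computational_Algebra.Primes"
begin

text \<open>Riemann zeta function as its defining series (used only for real s > 1).\<close>
definition riemann_zeta_real :: "real \<Rightarrow> real" where
  "riemann_zeta_real s = (\<Sum>k. real (Suc k) powr (- s))"

text \<open>Hurwitz zeta function zeta(s,a) = sum_{j>=0} (j+a)^(-s) (used for real s > 1, a > 0).\<close>
definition hurwitz_zeta_real :: "real \<Rightarrow> real \<Rightarrow> real" where
  "hurwitz_zeta_real s a = (\<Sum>j. (real j + a) powr (- s))"

definition divisor_sigma :: "real \<Rightarrow> int \<Rightarrow> real" where
  "divisor_sigma \<nu> m = (\<Sum>e\<in>{e::nat. 0 < e \<and> int e dvd m}. real e powr \<nu>)"

definition Bset :: "nat \<Rightarrow> nat \<Rightarrow> int \<Rightarrow> int set" where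
  "Bset c d n = {b::int. \<exists>a::int. a * int d - b * int c = n}"

definition bstar :: "nat \<Rightarrow> nat \<Rightarrow> int \<Rightarrow> int" where
  "bstar c d n = (SOME b. b \<in> Bset c d n \<and> (\<forall>b'\<in>Bset c d n. \<bar>b\<bar> \<le> \<bar>b'\<bar>))"

definition u_cd :: "nat \<Rightarrow> nat \<Rightarrow> int \<Rightarrow> real" where
  "u_cd c d n = real_of_int (bstar c d n) * real (gcd c d) / real d"

definition inner_pairs :: "nat \<Rightarrow> nat \<Rightarrow> int \<Rightarrow> (int \<times> int) set" where
  "inner_pairs c d n = {(a, b). a \<noteq> 0 \<and> b \<noteq> 0 \<and> a * int d - b * int c = n}"

end

theory Submission
  imports Defs
begin

text \<open>
  For fixed c the admissible b form the set B = {b. d dvd n + b c}, which is nonempty iff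
  gcd(c, d) dvd n and is then a coset b* + (d / gcd(c, d)) Z. So the inner sum is
  c^P sum_{b in B} b^P minus the term (-n)^P of the excluded pair with a = 0, which exists iff
  c dvd n; summed against c^r2 these corrections give the divisor sum sigma_r2(n).
  As B depends only on c mod d, splitting the outer sum into residue classes mod d produces
  Hurwitz zeta values. If d dvd n then B = (d / gcd(c, d)) Z, and sum_c c^s gcd(c, d)^t is
  zeta(-s) times an Euler product, obtained one prime power p^e of d at a time from
  gcd(c, p^e)^t = sum_{i <= e, p^i dvd c} J_t(p^i), with J_t Jordan's totient.
\<close>

section \<open>Series and the zeta functions\<close>

lemma has_sum_sum:
  fixes f :: "'i \<Rightarrow> 'a \<Rightarrow> 'b::topological_comm_monoid_add"
  assumes "finite I" "\<And>i. i \<in> I \<Longrightarrow> (f i has_sum s i) A"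
  shows "((\<lambda>x. \<Sum>i\<in>I. f i x) has_sum (\<Sum>i\<in>I. s i)) A"
  using assms by (induction I rule: finite_induct) (auto intro: has_sum_add)

lemma has_sum_multiples_iff:
  fixes f :: "nat \<Rightarrow> 'a::topological_comm_monoid_add"
  assumes "0 < k"
  shows "((\<lambda>c. if k dvd c then f c else 0) has_sum S) {1..} \<longleftrightarrow> ((\<lambda>c. f (k * c)) has_sum S) {1..}"
proof -
  have inj: "inj_on (\<lambda>c. k * c) {1..}"
    using assms by (auto simp: inj_on_def)
  have "((\<lambda>c. if k dvd c then f c else 0) has_sum S) {1..}
        \<longleftrightarrow> ((\<lambda>c. if k dvd c then f c else 0) has_sum S) ((\<lambda>c. k * c) ` {1..})"
    using assms by (intro has_sum_cong_neutral) (auto simp: Suc_le_eq)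
  also have "\<dots> \<longleftrightarrow> ((\<lambda>c. f (k * c)) has_sum S) {1..}"
    by (subst has_sum_reindex[OF inj]) (simp add: o_def)
  finally show ?thesis .
qed

lemma riemann_zeta_real_has_sum:
  assumes "1 < s"
  shows "((\<lambda>k::nat. real k powr (- s)) has_sum riemann_zeta_real s) {1..}"
proof -
  have "summable (\<lambda>k::nat. real k powr (- s))"
    using assms by (subst summable_real_powr_iff) auto
  then have "summable (\<lambda>k::nat. real (Suc k) powr (- s))"
    by (subst summable_Suc_iff)
  then have "((\<lambda>k::nat. real (Suc k) powr (- s)) has_sum riemann_zeta_real s) UNIV"
    unfolding riemann_zeta_real_def by (intro sums_nonneg_imp_has_sum) auto
  moreover have "range Suc = {1..}"
    by (auto simp: image_iff Suc_le_eq gr0_conv_Suc)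
  ultimately show ?thesis
    using has_sum_reindex[of Suc UNIV "\<lambda>k. real k powr (- s)"] by (simp add: o_def)
qed

lemma hurwitz_zeta_real_has_sum:
  assumes "1 < s" "0 < a"
  shows "((\<lambda>j::nat. (real j + a) powr (- s)) has_sum hurwitz_zeta_real s a) UNIV"
proof -
  have "summable (\<lambda>j::nat. real j powr (- s))"
    using assms by (subst summable_real_powr_iff) auto
  then have "summable (\<lambda>j::nat. (real j + a) powr (- s))"
    by (rule summable_comparison_test'[where N = 1]) (use assms in \<open>auto intro!: powr_mono2'\<close>)
  then show ?thesis
    unfolding hurwitz_zeta_real_def by (intro sums_nonneg_imp_has_sum) auto
qed

lemma int_powi_has_sum:
  assumes "P \<le> -2"
  shows "((\<lambda>m::int. real_of_int m powi P) has_sum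
           (if even P then 2 * riemann_zeta_real (- P) else 0)) UNIV"
proof -
  have "((\<lambda>k::nat. real k powr real_of_int P) has_sum riemann_zeta_real (- P)) {1..}"
    using riemann_zeta_real_has_sum[of "- P"] assms by simp
  then have nat: "((\<lambda>k::nat. real k powi P) has_sum riemann_zeta_real (- P)) {1..}"
    by (rule has_sum_cong[THEN iffD1, rotated]) (simp add: powr_real_of_int')
  have pos: "((\<lambda>m::int. real_of_int m powi P) has_sum riemann_zeta_real (- P)) {1..}"
  proof -
    have "int ` {1..} = {1::int..}"
      by (auto intro!: image_eqI[where x = "nat x" for x])
    then show ?thesis
      using nat has_sum_reindex[of int "{1..}" "\<lambda>m. real_of_int m powi P"] by (simp add: o_def)
  qed
  have neg: "((\<lambda>m::int. real_of_int m powi P) has_sum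
               ((if even P then 1 else -1) * riemann_zeta_real (- P))) (uminus ` {1..})"
  proof -
    have inj: "inj_on (uminus :: int \<Rightarrow> int) {1..}"
      by simp
    have "real_of_int (- m) powi P = (if even P then 1 else -1) * real_of_int m powi P" for m
      by (simp add: power_int_minus_left)
    then show ?thesis
      unfolding has_sum_reindex[OF inj] using has_sum_cmult_right[OF pos] by (simp add: o_def)
  qed
  have zero: "((\<lambda>m::int. real_of_int m powi P) has_sum 0) {0}"
    using assms by (simp add: has_sum_finite_iff)
  have "UNIV = ({0} \<union> {1::int..}) \<union> uminus ` {1..}"
    by auto
  moreover have "((\<lambda>m::int. real_of_int m powi P) has_sum
      (0 + riemann_zeta_real (- P) + (if even P then 1 else -1) * riemann_zeta_real (- P)))
      (({0} \<union> {1::int..}) \<union> uminus ` {1..})"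
    by (intro has_sum_Un_disjoint zero pos neg) auto
  ultimately show ?thesis
    by auto
qed

lemma shifted_int_powi_summable:
  fixes u :: real and P :: int
  assumes "P \<le> -2"
  shows "(\<lambda>m::int. (real_of_int m + u) powi P) summable_on UNIV"
proof -
  define N where "N = \<lceil>2 * \<bar>u\<bar>\<rceil> + 2"
  define F where "F = {m::int. \<bar>m\<bar> < N}"
  have "finite F"
    unfolding F_def by (rule finite_subset[of _ "{-N..N}"]) auto
  have "(\<lambda>m::int. 4 * real_of_int m powi (-2)) summable_on UNIV"
    using int_powi_has_sum[of "-2"] by (intro summable_on_cmult_right) (auto dest: has_sum_imp_summable)
  then have "(\<lambda>m::int. norm ((real_of_int m + u) powi P)) summable_on (UNIV - F)"
  proof (rule summable_on_comparison_test[OF summable_on_subset])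
    fix m assume "m \<in> UNIV - F"
    then have "\<bar>m\<bar> \<ge> N"
      by (simp add: F_def)
    then have large: "\<bar>real_of_int m\<bar> / 2 \<le> \<bar>real_of_int m + u\<bar>" "1 \<le> \<bar>real_of_int m\<bar> / 2"
      unfolding N_def by linarith+
    have "norm ((real_of_int m + u) powi P) = \<bar>real_of_int m + u\<bar> powi P"
      by (simp add: power_int_abs)
    also have "\<dots> \<le> \<bar>real_of_int m + u\<bar> powi (-2)"
      using large assms by (intro power_int_increasing) auto
    also have "\<dots> \<le> (\<bar>real_of_int m\<bar> / 2) powi (-2)"
      using large by (intro power_int_antimono) auto
    also have "\<dots> = 4 * real_of_int m powi (-2)"
      by (simp add: power_int_minus power2_eq_square field_simps)
    finally show "norm ((real_of_int m + u) powi P) \<le> 4 * real_of_int m powi (-2)" .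
  qed auto
  then have "(\<lambda>m::int. (real_of_int m + u) powi P) summable_on (UNIV - F)"
    using summable_on_iff_abs_summable_on_real by blast
  then have "(\<lambda>m::int. (real_of_int m + u) powi P) summable_on ((UNIV - F) \<union> F)"
    using \<open>finite F\<close> by (intro summable_on_Un_disjoint) auto
  then show ?thesis
    by simp
qed

section \<open>The admissible values of b\<close>

lemma dvd_mult_iff_div_gcd_dvd:
  fixes m x c :: int
  assumes "m \<noteq> 0"
  shows "m dvd x * c \<longleftrightarrow> m div gcd m c dvd x"
proof -
  define g where "g = gcd m c"
  have "g \<noteq> 0"
    using assms by (simp add: g_def)
  obtain m' c' where m': "m = m' * g" and c': "c = c' * g" and "coprime m' c'"
    using gcd_coprime_exists[of m c] \<open>g \<noteq> 0\<close> unfolding g_def by blast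
  have "m dvd x * c \<longleftrightarrow> m' dvd x * c'"
    using \<open>g \<noteq> 0\<close> by (simp add: m' c' mult.assoc)
  also have "\<dots> \<longleftrightarrow> m' dvd x"
    using \<open>coprime m' c'\<close> by (simp add: coprime_dvd_mult_left_iff)
  also have "m' = m div g"
    using \<open>g \<noteq> 0\<close> by (simp add: m')
  finally show ?thesis
    by (simp add: g_def)
qed

lemma mem_Bset_iff: "b \<in> Bset c d n \<longleftrightarrow> int d dvd n + b * int c"
proof -
  have "a * int d - b * int c = n \<longleftrightarrow> n + b * int c = int d * a" for a
    by (auto simp: algebra_simps)
  then show ?thesis
    unfolding Bset_def dvd_def by auto
qed

lemma Bset_cong_mod:
  assumes "c mod d = c' mod d"
  shows "Bset c d n = Bset c' d n"
proof -
  have "int d dvd int c - int c'"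
    using assms by (metis mod_eq_dvd_iff of_nat_mod)
  then have "int d dvd b * (int c - int c')" for b
    by simp
  moreover have "n + b * int c = (n + b * int c') + b * (int c - int c')" for b
    by (simp add: algebra_simps)
  ultimately have "int d dvd n + b * int c \<longleftrightarrow> int d dvd n + b * int c'" for b
    by (metis dvd_add_left_iff)
  then show ?thesis
    by (auto simp: mem_Bset_iff)
qed

lemma Bset_ne_empty_iff: "Bset c d n \<noteq> {} \<longleftrightarrow> int (gcd c d) dvd n"
proof
  assume "Bset c d n \<noteq> {}"
  then obtain a b where "a * int d - b * int c = n"
    by (auto simp: Bset_def)
  moreover have "int (gcd c d) dvd a * int d - b * int c"
    by (intro dvd_diff) simp_all
  ultimately show "int (gcd c d) dvd n"
    by simp
next
  assume "int (gcd c d) dvd n"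
  then obtain k where k: "n = int (gcd c d) * k" ..
  obtain x y where "x * int d + y * int c = int (gcd c d)"
    using bezout_int[of "int d" "int c"] by (auto simp: gcd.commute)
  then have "(x * k) * int d - (- y * k) * int c = n"
    by (simp add: k algebra_simps flip: \<open>x * int d + y * int c = int (gcd c d)\<close>)
  then show "Bset c d n \<noteq> {}"
    unfolding Bset_def by blast
qed

lemma Bset_eq_progression:
  assumes "0 < d" "b0 \<in> Bset c d n"
  shows "Bset c d n = range (\<lambda>k. b0 + k * (int d div int (gcd c d)))"
proof (rule set_eqI)
  fix b
  let ?q = "int d div int (gcd c d)"
  have "b \<in> Bset c d n \<longleftrightarrow> int d dvd (n + b0 * int c) + (b - b0) * int c"
    by (simp add: mem_Bset_iff algebra_simps)
  also have "\<dots> \<longleftrightarrow> int d dvd (b - b0) * int c"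
    using assms(2) by (simp add: mem_Bset_iff dvd_add_right_iff)
  also have "\<dots> \<longleftrightarrow> ?q dvd b - b0"
    using assms(1) by (simp add: dvd_mult_iff_div_gcd_dvd gcd.commute)
  also have "\<dots> \<longleftrightarrow> b \<in> range (\<lambda>k. b0 + k * ?q)"
    by (auto simp: dvd_def algebra_simps)
  finally show "b \<in> Bset c d n \<longleftrightarrow> b \<in> range (\<lambda>k. b0 + k * ?q)" .
qed

lemma bstar_in_Bset:
  assumes "int (gcd c d) dvd n"
  shows "bstar c d n \<in> Bset c d n"
proof -
  obtain b0 where "b0 \<in> Bset c d n"
    using assms Bset_ne_empty_iff by blast
  then obtain b where "b \<in> Bset c d n" "\<forall>b'. b' \<in> Bset c d n \<longrightarrow> nat \<bar>b\<bar> \<le> nat \<bar>b'\<bar>"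
    using ex_has_least_nat[of "\<lambda>b. b \<in> Bset c d n" b0 "\<lambda>b. nat \<bar>b\<bar>"] by blast
  then have "\<exists>b. b \<in> Bset c d n \<and> (\<forall>b'\<in>Bset c d n. \<bar>b\<bar> \<le> \<bar>b'\<bar>)"
    by (auto simp: nat_le_eq_zle)
  then show ?thesis
    unfolding bstar_def by (rule someI2_ex) blast
qed

definition Bset_power_sum :: "nat \<Rightarrow> nat \<Rightarrow> int \<Rightarrow> int \<Rightarrow> real" where
  "Bset_power_sum c d n P = (\<Sum>\<^sub>\<infinity>b\<in>Bset c d n. real_of_int b powi P)"

lemma has_sum_Bset_progression:
  assumes "0 < d" "P \<le> -2" "b0 \<in> Bset c d n"
  shows "((\<lambda>b. real_of_int b powi P) has_sum
           ((real d / real (gcd c d)) powi P *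
            (\<Sum>\<^sub>\<infinity>m::int. (real_of_int m + real_of_int b0 * real (gcd c d) / real d) powi P)))
         (Bset c d n)"
proof -
  define q where "q = int d div int (gcd c d)"
  define u where "u = real_of_int b0 * real (gcd c d) / real d"
  have q: "real_of_int q = real d / real (gcd c d)"
    unfolding q_def by (subst of_int_div) auto
  have "real_of_int q > 0"
    using assms(1) q by simp
  then have "q > 0"
    by simp
  have inj: "inj (\<lambda>k. b0 + k * q)"
    using \<open>q > 0\<close> by (auto simp: inj_on_def)
  have progression_term: "real_of_int (b0 + m * q) powi P = real_of_int q powi P * (real_of_int m + u) powi P" for m
  proof -
    have "real_of_int (b0 + m * q) = real_of_int q * (real_of_int m + u)"
      using assms(1) by (simp add: q u_def field_simps)
    then show ?thesis
      by (simp add: power_int_mult_distrib)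
  qed
  have "((\<lambda>m::int. real_of_int q powi P * (real_of_int m + u) powi P) has_sum
          (real_of_int q powi P * (\<Sum>\<^sub>\<infinity>m::int. (real_of_int m + u) powi P))) UNIV"
    using shifted_int_powi_summable[OF assms(2)] by (intro has_sum_cmult_right) simp
  then have "((\<lambda>b. real_of_int b powi P) has_sum
          (real_of_int q powi P * (\<Sum>\<^sub>\<infinity>m::int. (real_of_int m + u) powi P))) (range (\<lambda>k. b0 + k * q))"
    by (subst has_sum_reindex[OF inj]) (simp only: o_def progression_term)
  moreover have "Bset c d n = range (\<lambda>k. b0 + k * q)"
    using Bset_eq_progression[OF assms(1,3)] by (simp add: q_def)
  ultimately show ?thesis
    by (simp add: q u_def)
qed

lemma has_sum_Bset_power_sum:
  assumes "0 < d" "P \<le> -2"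
  shows "((\<lambda>b. real_of_int b powi P) has_sum Bset_power_sum c d n P) (Bset c d n)"
proof (cases "Bset c d n = {}")
  case False
  then obtain b0 where "b0 \<in> Bset c d n"
    by blast
  with assms have "(\<lambda>b. real_of_int b powi P) summable_on Bset c d n"
    by (metis has_sum_Bset_progression has_sum_imp_summable)
  then show ?thesis
    unfolding Bset_power_sum_def by (rule has_sum_infsum)
qed (simp add: Bset_power_sum_def)

lemma Bset_power_sum_eq:
  assumes "0 < d" "P \<le> -2" "b0 \<in> Bset c d n"
  shows "Bset_power_sum c d n P = (real d / real (gcd c d)) powi P *
           (\<Sum>\<^sub>\<infinity>m::int. (real_of_int m + real_of_int b0 * real (gcd c d) / real d) powi P)"
  using has_sum_Bset_progression[OF assms] unfolding Bset_power_sum_def by (rule infsumI)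

lemma Bset_power_sum_eq_0:
  assumes "\<not> int (gcd c d) dvd n"
  shows "Bset_power_sum c d n P = 0"
  using assms Bset_ne_empty_iff[of c d n] by (simp add: Bset_power_sum_def)

lemma Bset_power_sum_cong_mod:
  assumes "c mod d = c' mod d"
  shows "Bset_power_sum c d n P = Bset_power_sum c' d n P"
  unfolding Bset_power_sum_def Bset_cong_mod[OF assms] ..

section \<open>The inner sum\<close>

lemma bij_betw_snd_inner_pairs:
  assumes "0 < d"
  shows "bij_betw snd (inner_pairs c d n) (Bset c d n - {b. n + b * int c = 0} - {0})"
proof (rule bij_betw_imageI)
  show "inj_on snd (inner_pairs c d n)"
    using assms by (auto simp: inj_on_def inner_pairs_def)
  show "snd ` inner_pairs c d n = Bset c d n - {b. n + b * int c = 0} - {0}"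
  proof (intro equalityI subsetI)
    fix b assume "b \<in> snd ` inner_pairs c d n"
    then obtain a where a: "a \<noteq> 0" "b \<noteq> 0" "a * int d - b * int c = n"
      by (auto simp: inner_pairs_def)
    then have "b \<in> Bset c d n"
      unfolding Bset_def by blast
    moreover have "n + b * int c \<noteq> 0"
      using a assms by (simp flip: a(3))
    ultimately show "b \<in> Bset c d n - {b. n + b * int c = 0} - {0}"
      using a(2) by blast
  next
    fix b assume "b \<in> Bset c d n - {b. n + b * int c = 0} - {0}"
    then obtain a where "a * int d - b * int c = n" "n + b * int c \<noteq> 0" "b \<noteq> 0"
      by (auto simp: Bset_def)
    moreover from this have "a \<noteq> 0"
      by auto
    ultimately have "(a, b) \<in> inner_pairs c d n"
      by (simp add: inner_pairs_def)
    then show "b \<in> snd ` inner_pairs c d n"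
      by force
  qed
qed

lemma has_sum_b_with_a_eq_0:
  assumes "0 < c"
  shows "((\<lambda>b. real_of_int (b * int c) powi P) has_sum (if int c dvd n then real_of_int (- n) powi P else 0))
           {b. n + b * int c = 0}"
proof (cases "int c dvd n")
  case True
  then obtain k where "n = int c * k" ..
  then have "n + b * int c = (b + k) * int c" for b
    by (simp add: algebra_simps)
  then have "{b. n + b * int c = 0} = {- k}"
    using assms by auto
  moreover have "real_of_int (- k * int c) powi P = real_of_int (- n) powi P"
    by (simp add: \<open>n = int c * k\<close> mult.commute)
  moreover have "((\<lambda>b. real_of_int (b * int c) powi P) has_sum real_of_int (- k * int c) powi P) {- k}"
    by (rule has_sum_finiteI) simp_all
  ultimately show ?thesis
    using True by (simp only: if_True)
next
  case False
  then have "n + b * int c \<noteq> 0" for b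
    by (metis add_eq_0_iff dvd_minus_iff dvd_triv_right)
  with False show ?thesis
    by simp
qed

lemma has_sum_inner_pairs:
  assumes "0 < c" "0 < d" "P \<le> -2"
  shows "((\<lambda>(a, b). real_of_int (b * int c) powi P) has_sum
           (real c powi P * Bset_power_sum c d n P - (if int c dvd n then real_of_int (- n) powi P else 0)))
         (inner_pairs c d n)"
proof -
  let ?f = "\<lambda>b. real_of_int (b * int c) powi P"
  let ?z = "if int c dvd n then real_of_int (- n) powi P else 0"
  define Z where "Z = {b. n + b * int c = 0}"
  have "(?f has_sum real c powi P * Bset_power_sum c d n P) (Bset c d n)"
    using has_sum_cmult_right[OF has_sum_Bset_power_sum[OF assms(2,3)], of "real c powi P"]
    by (simp add: power_int_mult_distrib mult.commute)
  moreover have "(?f has_sum ?z) Z"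
    unfolding Z_def using assms(1) by (rule has_sum_b_with_a_eq_0)
  moreover have "Z \<subseteq> Bset c d n"
    by (auto simp: Z_def mem_Bset_iff)
  ultimately have "(?f has_sum (real c powi P * Bset_power_sum c d n P - ?z)) (Bset c d n - Z)"
    by (rule has_sum_Diff)
  \<comment> \<open>removing b = 0 changes nothing, as 0 powi P = 0\<close>
  moreover have "(?f has_sum S) (Bset c d n - Z - {0}) \<longleftrightarrow> (?f has_sum S) (Bset c d n - Z)" for S
    by (rule has_sum_cong_neutral) (use assms(3) in auto)
  ultimately have "(?f has_sum (real c powi P * Bset_power_sum c d n P - ?z)) (Bset c d n - Z - {0})"
    by blast
  then have "((\<lambda>x. ?f (snd x)) has_sum (real c powi P * Bset_power_sum c d n P - ?z)) (inner_pairs c d n)"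
    by (subst has_sum_reindex_bij_betw[OF bij_betw_snd_inner_pairs[OF assms(2)], of ?f])
      (simp only: Z_def)
  then show ?thesis
    by (simp add: case_prod_unfold)
qed

lemma divisor_sigma_has_sum:
  assumes "n \<noteq> 0"
  shows "((\<lambda>c::nat. if int c dvd n then real c powr \<nu> else 0) has_sum divisor_sigma \<nu> n) {1..}"
proof (rule has_sum_finite_neutralI)
  show "finite {e::nat. 0 < e \<and> int e dvd n}"
    by (rule finite_subset[of _ "{..nat \<bar>n\<bar>}"]) (use assms in \<open>auto simp: le_nat_iff intro!: zdvd_imp_le\<close>)
qed (auto simp: divisor_sigma_def)

lemma has_sum_weighted_inner_sums:
  assumes "n \<noteq> 0" "0 < d" "P \<le> -2"
    and "((\<lambda>c. real c powr (r + real_of_int P) * Bset_power_sum c d n P) has_sum T) {1..}"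
  shows "((\<lambda>c. real c powr r * (\<Sum>\<^sub>\<infinity>(a, b)\<in>inner_pairs c d n. real_of_int (b * int c) powi P))
           has_sum ((-1) powi (P + 1) * real_of_int n powi P * divisor_sigma r n + T)) {1..}"
proof -
  let ?e = "(-1::real) powi (P + 1) * real_of_int n powi P"
  have "real c powr r * (\<Sum>\<^sub>\<infinity>(a, b)\<in>inner_pairs c d n. real_of_int (b * int c) powi P)
        = ?e * (if int c dvd n then real c powr r else 0)
          + real c powr (r + real_of_int P) * Bset_power_sum c d n P" if "c \<in> {1..}" for c
  proof -
    have "0 < c"
      using that by simp
    have sign: "(- real_of_int n) powi P = - ?e"
      by (simp add: power_int_minus_left)
    have power: "real c powr r * real c powi P = real c powr (r + real_of_int P)"
      using \<open>0 < c\<close> by (simp add: powr_add powr_real_of_int')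
    have "real c powr r * (\<Sum>\<^sub>\<infinity>(a, b)\<in>inner_pairs c d n. real_of_int (b * int c) powi P)
        = (real c powr r * real c powi P) * Bset_power_sum c d n P
          - real c powr r * (if int c dvd n then (- real_of_int n) powi P else 0)"
      unfolding infsumI[OF has_sum_inner_pairs[OF \<open>0 < c\<close> assms(2,3)]]
      by (simp add: algebra_simps)
    then show ?thesis
      unfolding power sign by simp
  qed
  moreover have "((\<lambda>c. ?e * (if int c dvd n then real c powr r else 0)
          + real c powr (r + real_of_int P) * Bset_power_sum c d n P)
        has_sum (?e * divisor_sigma r n + T)) {1..}"
    by (intro has_sum_add has_sum_cmult_right divisor_sigma_has_sum assms)
  ultimately show ?thesis
    by (subst has_sum_cong) auto
qed

section \<open>Periodic weights and the Hurwitz zeta function\<close>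

lemma residue_classes_cover:
  fixes d :: nat
  assumes "0 < d"
  shows "(\<Union>c'\<in>{1..d}. range (\<lambda>j. c' + j * d)) = {1..}"
proof (intro equalityI subsetI)
  fix c :: nat assume "c \<in> {1..}"
  then have "c = ((c - 1) mod d + 1) + ((c - 1) div d) * d" "(c - 1) mod d + 1 \<in> {1..d}"
    using assms by (auto simp: Suc_leI)
  then show "c \<in> (\<Union>c'\<in>{1..d}. range (\<lambda>j. c' + j * d))"
    by blast
qed auto

lemma residue_classes_disjoint:
  fixes c1 c2 d :: nat
  assumes "c1 \<in> {1..d}" "c2 \<in> {1..d}" "c1 \<noteq> c2"
  shows "range (\<lambda>j. c1 + j * d) \<inter> range (\<lambda>j. c2 + j * d) = {}"
proof (rule ccontr)
  assume "range (\<lambda>j. c1 + j * d) \<inter> range (\<lambda>j. c2 + j * d) \<noteq> {}"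
  then obtain j1 j2 where "c1 + j1 * d = c2 + j2 * d"
    by auto
  then have "(c1 - 1 + j1 * d) mod d = (c2 - 1 + j2 * d) mod d"
    using assms by (metis Nat.add_diff_assoc2 atLeastAtMost_iff)
  moreover have "c1 - 1 < d" "c2 - 1 < d"
    using assms by auto
  ultimately show False
    using assms by auto
qed

lemma has_sum_powr_residue_class:
  assumes "0 < d" "s < -1" "0 < c'"
  shows "((\<lambda>c. real c powr s) has_sum real d powr s * hurwitz_zeta_real (- s) (real c' / real d))
           (range (\<lambda>j. c' + j * d))"
proof -
  have inj: "inj (\<lambda>j. c' + j * d)"
    using assms(1) by (auto simp: inj_on_def)
  have "(\<lambda>c. real c powr s) \<circ> (\<lambda>j. c' + j * d) = (\<lambda>j. real d powr s * (real j + real c' / real d) powr s)"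
  proof
    fix j
    have "real (c' + j * d) = real d * (real j + real c' / real d)"
      using assms(1) by (simp add: field_simps)
    then show "((\<lambda>c. real c powr s) \<circ> (\<lambda>j. c' + j * d)) j = real d powr s * (real j + real c' / real d) powr s"
      using assms(1) by (simp add: powr_mult del: of_nat_add of_nat_mult)
  qed
  moreover have "((\<lambda>j. real d powr s * (real j + real c' / real d) powr s) has_sum
                   real d powr s * hurwitz_zeta_real (- s) (real c' / real d)) UNIV"
    using hurwitz_zeta_real_has_sum[of "- s" "real c' / real d"] assms by (intro has_sum_cmult_right) simp
  ultimately show ?thesis
    unfolding has_sum_reindex[OF inj] by (simp only:)
qed

lemma has_sum_powr_periodic:
  fixes K :: "nat \<Rightarrow> real"
  assumes "0 < d" "s < -1" and periodic: "\<And>c c'. c mod d = c' mod d \<Longrightarrow> K c = K c'"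
  shows "((\<lambda>c. real c powr s * K c) has_sum
           (\<Sum>c'\<in>{1..d}. K c' * (real d powr s * hurwitz_zeta_real (- s) (real c' / real d)))) {1..}"
proof -
  have "((\<lambda>c. real c powr s * K c) has_sum K c' * (real d powr s * hurwitz_zeta_real (- s) (real c' / real d)))
          (range (\<lambda>j. c' + j * d))" if "c' \<in> {1..d}" for c'
  proof -
    have "((\<lambda>c. K c' * real c powr s) has_sum K c' * (real d powr s * hurwitz_zeta_real (- s) (real c' / real d)))
            (range (\<lambda>j. c' + j * d))"
      using that by (intro has_sum_cmult_right has_sum_powr_residue_class assms(1,2)) simp
    moreover have "K (c' + j * d) = K c'" for j
      by (rule periodic) simp
    then have "((\<lambda>c. real c powr s * K c) has_sum S) (range (\<lambda>j. c' + j * d))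
           \<longleftrightarrow> ((\<lambda>c. K c' * real c powr s) has_sum S) (range (\<lambda>j. c' + j * d))" for S
      by (intro has_sum_cong) auto
    ultimately show ?thesis
      by blast
  qed
  then have "((\<lambda>c. real c powr s * K c) has_sum
           (\<Sum>c'\<in>{1..d}. K c' * (real d powr s * hurwitz_zeta_real (- s) (real c' / real d))))
           (\<Union>c'\<in>{1..d}. range (\<lambda>j. c' + j * d))"
    by (intro sum_has_sum residue_classes_disjoint) auto
  then show ?thesis
    unfolding residue_classes_cover[OF assms(1)] .
qed

section \<open>The gcd series\<close>

lemma gcd_mult_coprime_right:
  fixes a b c :: nat
  assumes "coprime a b"
  shows "gcd c (a * b) = gcd c a * gcd c b"
proof (rule dvd_antisym)
  obtain x y where xy: "gcd c (a * b) = x * y" "x dvd a" "y dvd b"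
    using dvd_productE[of "gcd c (a * b)" a b] by auto
  then have "x * y dvd c"
    by (metis gcd_dvd1)
  then have "x dvd c" "y dvd c"
    by (auto intro: dvd_mult_left dvd_mult_right)
  with xy show "gcd c (a * b) dvd gcd c a * gcd c b"
    by (simp add: mult_dvd_mono)
next
  have "coprime (gcd c a) (gcd c b)"
    by (rule coprime_divisors[OF gcd_dvd2 gcd_dvd2 assms])
  then show "gcd c a * gcd c b dvd gcd c (a * b)"
    by (simp add: divides_mult)
qed

lemma prime_power_coprime_induct [consumes 1, case_names one prime_power_mult]:
  fixes d :: nat
  assumes "0 < d" "P 1"
    and "\<And>p e m. prime p \<Longrightarrow> 0 < e \<Longrightarrow> 0 < m \<Longrightarrow> \<not> p dvd m \<Longrightarrow> P m \<Longrightarrow> P (p ^ e * m)"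
  shows "P d"
  using assms(1)
proof (induction d rule: less_induct)
  case (less d)
  show ?case
  proof (cases "d = 1")
    case False
    then obtain p where p: "prime p" "p dvd d"
      using prime_factor_nat by blast
    define e where "e = multiplicity p d"
    define m where "m = d div p ^ e"
    have d: "d = p ^ e * m"
      unfolding m_def e_def using multiplicity_dvd[of p d] by simp
    have "\<not> p dvd m"
      unfolding m_def e_def using less.prems p(1) by (intro multiplicity_decompose) auto
    have "0 < e"
      unfolding e_def using less.prems p by (simp add: prime_multiplicity_gt_zero_iff)
    then have "1 < p ^ e"
      using p(1) by (intro one_less_power prime_gt_1_nat)
    have "0 < m"
      using less.prems d by simp
    have "1 * m < p ^ e * m"
      using \<open>1 < p ^ e\<close> \<open>0 < m\<close> by (rule mult_strict_right_mono)
    then have "m < d"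
      using d by simp
    show ?thesis
      unfolding d using assms(3)[OF p(1) \<open>0 < e\<close> \<open>0 < m\<close> \<open>\<not> p dvd m\<close>] less.IH \<open>m < d\<close> \<open>0 < m\<close> by blast
  qed (use assms(2) in simp)
qed

lemma prod_prime_factors_mult_coprime:
  fixes a b :: nat
  assumes "coprime a b" "0 < a" "0 < b"
  shows "(\<Prod>p\<in>prime_factors (a * b). f p (multiplicity p (a * b)))
       = (\<Prod>p\<in>prime_factors a. f p (multiplicity p a)) * (\<Prod>p\<in>prime_factors b. f p (multiplicity p b))"
proof -
  have mult: "multiplicity p (a * b) = multiplicity p a + multiplicity p b" if "prime p" for p
    using that assms by (intro prime_elem_multiplicity_mult_distrib) auto
  have "prime_factors a \<inter> prime_factors b = {}"
    using assms(1) by (auto simp: in_prime_factors_iff dest: coprime_common_divisor not_prime_unit)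
  moreover have "multiplicity p (a * b) = multiplicity p a" if "p \<in> prime_factors a" for p
    using that calculation mult[of p] by (auto intro!: not_dvd_imp_multiplicity_0 simp: prime_factors_dvd assms)
  moreover have "multiplicity p (a * b) = multiplicity p b" if "p \<in> prime_factors b" for p
    using that calculation(1) mult[of p] by (auto intro!: not_dvd_imp_multiplicity_0 simp: prime_factors_dvd assms)
  ultimately show ?thesis
    using assms by (simp add: prime_factors_product prod.union_disjoint)
qed

lemma prod_prime_factors_prime_power:
  fixes p :: nat
  assumes "prime p" "0 < e"
  shows "(\<Prod>q\<in>prime_factors (p ^ e). f q (multiplicity q (p ^ e))) = f p e"
proof -
  have "prime_factors (p ^ e) = {p}"
    using assms by (simp add: prime_factorization_prime_power)
  then show ?thesis
    using assms by simp
qed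

definition jordan_totient_prime_power :: "real \<Rightarrow> real \<Rightarrow> nat \<Rightarrow> real" where
  "jordan_totient_prime_power t p i = (if i = 0 then 1 else p powr (t * real i) - p powr (t * real (i - 1)))"

lemma sum_jordan_totient_prime_power:
  assumes "0 < p"
  shows "(\<Sum>i=0..j. jordan_totient_prime_power t p i) = p powr (t * real j)"
  using assms by (induction j) (auto simp: jordan_totient_prime_power_def)

lemma powr_gcd_prime_power_eq_sum:
  fixes p c e :: nat
  assumes "prime p"
  shows "real (gcd c (p ^ e)) powr t
       = (\<Sum>i=0..e. jordan_totient_prime_power t (real p) i * (if p ^ i dvd c then 1 else 0))"
proof -
  obtain j where j: "j \<le> e" "gcd c (p ^ e) = p ^ j"
    using divides_primepow_nat[OF assms(1), of "gcd c (p ^ e)" e] by auto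
  have "2 \<le> p"
    using assms(1) by (rule prime_ge_2_nat)
  have "p ^ i dvd c \<longleftrightarrow> i \<le> j" if "i \<le> e" for i
  proof -
    have "p ^ i dvd c \<longleftrightarrow> p ^ i dvd gcd c (p ^ e)"
      using that by (simp add: le_imp_power_dvd)
    also have "\<dots> \<longleftrightarrow> i \<le> j"
      unfolding j(2) using \<open>2 \<le> p\<close> by (rule dvd_power_iff_le)
    finally show ?thesis .
  qed
  then have "(\<Sum>i=0..e. jordan_totient_prime_power t (real p) i * (if p ^ i dvd c then 1 else 0))
           = (\<Sum>i\<in>{0..e} \<inter> {i. i \<le> j}. jordan_totient_prime_power t (real p) i)"
    by (simp add: sum.inter_restrict if_distrib cong: if_cong)
  also have "{0..e} \<inter> {i. i \<le> j} = {0..j}"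
    using j(1) by auto
  also have "(\<Sum>i=0..j. jordan_totient_prime_power t (real p) i) = real p powr (t * real j)"
    using \<open>2 \<le> p\<close> by (intro sum_jordan_totient_prime_power) simp
  also have "\<dots> = real (gcd c (p ^ e)) powr t"
    using \<open>2 \<le> p\<close> by (simp add: j(2) powr_realpow[symmetric] powr_powr mult.commute)
  finally show ?thesis ..
qed

definition gcd_euler_factor :: "real \<Rightarrow> real \<Rightarrow> nat \<Rightarrow> nat \<Rightarrow> real" where
  "gcd_euler_factor s t p e = 1 + (1 - real p powr (- t)) * (\<Sum>k=1..e. real p powr (real k * (s + t)))"

lemma sum_jordan_totient_prime_power_powr:
  fixes p :: nat
  assumes "0 < p"
  shows "(\<Sum>i=0..e. jordan_totient_prime_power t (real p) i * real (p ^ i) powr s) = gcd_euler_factor s t p e"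
proof -
  have "jordan_totient_prime_power t (real p) i * real (p ^ i) powr s
      = (1 - real p powr (- t)) * real p powr (real i * (s + t))" if "1 \<le> i" for i
  proof -
    have "real (p ^ i) powr s = real p powr (real i * s)"
      using assms by (simp add: powr_realpow[symmetric] powr_powr)
    moreover have "t * real (i - 1) = t * real i - t"
      using that by (simp add: algebra_simps)
    ultimately show ?thesis
      using that by (simp add: jordan_totient_prime_power_def powr_diff powr_add powr_minus
          field_simps)
  qed
  then show ?thesis
    by (simp add: gcd_euler_factor_def sum.atLeast_Suc_atMost sum_distrib_left
        jordan_totient_prime_power_def)
qed

lemma has_sum_powr_gcd_prime_power_mult:
  fixes p e m :: nat
  assumes "prime p" "\<not> p dvd m"
    and G: "((\<lambda>c. real c powr s * real (gcd c m) powr t) has_sum G) {1..}"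
  shows "((\<lambda>c. real c powr s * real (gcd c (p ^ e * m)) powr t) has_sum gcd_euler_factor s t p e * G) {1..}"
proof -
  let ?g = "\<lambda>i c. if p ^ i dvd c then real c powr s * real (gcd c m) powr t else 0"
  have coprime: "coprime (p ^ i) m" for i
    using assms(1,2) by (simp add: prime_imp_coprime_nat)
  have "((?g i) has_sum real (p ^ i) powr s * G) {1..}" for i
  proof -
    have "gcd (p ^ i * c) m = gcd c m" for c
      using coprime[of i] by (simp add: gcd_mult_left_left_cancel coprime_commute)
    then have "(\<lambda>c. real (p ^ i * c) powr s * real (gcd (p ^ i * c) m) powr t)
             = (\<lambda>c. real (p ^ i) powr s * (real c powr s * real (gcd c m) powr t))"
      by (simp add: powr_mult mult.assoc)
    moreover have "0 < p ^ i"
      using assms(1) by (simp add: prime_gt_0_nat)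
    ultimately show ?thesis
      unfolding has_sum_multiples_iff[OF \<open>0 < p ^ i\<close>] by (simp only: has_sum_cmult_right[OF G])
  qed
  then have sum_has: "((\<lambda>c. \<Sum>i=0..e. jordan_totient_prime_power t (real p) i * ?g i c) has_sum
               (\<Sum>i=0..e. jordan_totient_prime_power t (real p) i * (real (p ^ i) powr s * G))) {1..}"
    by (intro has_sum_sum has_sum_cmult_right) auto
  have expand: "(\<Sum>i=0..e. jordan_totient_prime_power t (real p) i * ?g i c)
               = real c powr s * real (gcd c (p ^ e * m)) powr t" for c
  proof -
    have "gcd c (p ^ e * m) = gcd c (p ^ e) * gcd c m"
      using coprime by (rule gcd_mult_coprime_right)
    then show ?thesis
      using assms(1)
      by (simp add: powr_gcd_prime_power_eq_sum powr_mult sum_distrib_left sum_distrib_right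
          if_distrib algebra_simps cong: if_cong)
  qed
  have factor: "(\<Sum>i=0..e. jordan_totient_prime_power t (real p) i * (real (p ^ i) powr s * G))
               = gcd_euler_factor s t p e * G"
    using assms(1)
    by (simp add: sum_jordan_totient_prime_power_powr[symmetric] prime_gt_0_nat sum_distrib_right mult.assoc)
  show ?thesis
    using has_sum_cong[THEN iffD1, OF expand sum_has] unfolding factor .
qed

lemma has_sum_powr_gcd_powr:
  fixes d :: nat
  assumes "0 < d" "s < -1"
  shows "((\<lambda>c. real c powr s * real (gcd c d) powr t) has_sum
           riemann_zeta_real (- s) * (\<Prod>p\<in>prime_factors d. gcd_euler_factor s t p (multiplicity p d))) {1..}"
  using assms(1)
proof (induction d rule: prime_power_coprime_induct)
  case one
  then show ?case
    using riemann_zeta_real_has_sum[of "- s"] assms(2) by simp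
next
  case (prime_power_mult p e m)
  have "coprime (p ^ e) m"
    using prime_power_mult.hyps by (simp add: prime_imp_coprime_nat)
  then have "(\<Prod>q\<in>prime_factors (p ^ e * m). gcd_euler_factor s t q (multiplicity q (p ^ e * m)))
           = gcd_euler_factor s t p e * (\<Prod>q\<in>prime_factors m. gcd_euler_factor s t q (multiplicity q m))"
    using prime_power_mult.hyps
    by (simp add: prod_prime_factors_mult_coprime prod_prime_factors_prime_power prime_gt_0_nat)
  then show ?case
    using has_sum_powr_gcd_prime_power_mult[OF prime_power_mult.hyps(1,4) prime_power_mult.IH]
    by (simp add: algebra_simps)
qed

section \<open>The outer sum\<close>

lemma Bset_power_sum_dvd_eq:
  assumes "0 < d" "P \<le> -2" "int d dvd n"
  shows "Bset_power_sum c d n P = real d powi P * (if even P then 2 * riemann_zeta_real (real_of_int (- P)) else 0)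
           * real (gcd c d) powr (- real_of_int P)"
proof -
  have "0 \<in> Bset c d n"
    using assms(3) by (simp add: mem_Bset_iff)
  moreover have "(\<Sum>\<^sub>\<infinity>m::int. real_of_int m powi P) = (if even P then 2 * riemann_zeta_real (real_of_int (- P)) else 0)"
    using int_powi_has_sum[OF assms(2)] by (simp add: infsumI)
  moreover have "(real d / real (gcd c d)) powi P = real d powi P * real (gcd c d) powr (- real_of_int P)"
    using assms(1)
    by (simp add: powr_minus powr_real_of_int' divide_inverse power_int_mult_distrib power_int_inverse)
  ultimately show ?thesis
    using Bset_power_sum_eq[OF assms(1,2)] by (simp add: algebra_simps)
qed

lemma has_sum_Bset_power_sum_dvd:
  assumes "0 < d" "P \<le> -2" "r + real_of_int P < -1" "int d dvd n"
  shows "((\<lambda>c. real c powr (r + real_of_int P) * Bset_power_sum c d n P) has_sum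
           2 * real d powi P * (if even P then 1 else 0) *
           riemann_zeta_real (real_of_int (- P)) * riemann_zeta_real (- r - real_of_int P) *
           (\<Prod>p\<in>prime_factors d. 1 + (1 - real p powi P) * (\<Sum>k=1..multiplicity p d. real p powr (real k * r))))
         {1..}"
proof -
  define Z where "Z = (if even P then 2 * riemann_zeta_real (real_of_int (- P)) else 0)"
  note K = Bset_power_sum_dvd_eq[OF assms(1,2,4), folded Z_def]
  have factor: "gcd_euler_factor (r + real_of_int P) (- real_of_int P) p e
              = 1 + (1 - real p powi P) * (\<Sum>k=1..e. real p powr (real k * r))" if "p \<in> prime_factors d" for p e
    using that by (simp add: gcd_euler_factor_def powr_real_of_int' prime_gt_0_nat in_prime_factors_iff)
  let ?s = "r + real_of_int P"
  let ?E = "\<Prod>p\<in>prime_factors d. gcd_euler_factor ?s (- real_of_int P) p (multiplicity p d)"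
  have "((\<lambda>c. real d powi P * Z * (real c powr ?s * real (gcd c d) powr (- real_of_int P)))
          has_sum real d powi P * Z * (riemann_zeta_real (- ?s) * ?E)) {1..}"
    using assms(1,3) by (intro has_sum_cmult_right has_sum_powr_gcd_powr)
  then have "((\<lambda>c. real c powr ?s * Bset_power_sum c d n P)
          has_sum real d powi P * Z * (riemann_zeta_real (- ?s) * ?E)) {1..}"
    by (simp add: K mult_ac)
  moreover have "real d powi P * Z * (riemann_zeta_real (- ?s) * ?E)
      = 2 * real d powi P * (if even P then 1 else 0) *
           riemann_zeta_real (real_of_int (- P)) * riemann_zeta_real (- r - real_of_int P) *
           (\<Prod>p\<in>prime_factors d. 1 + (1 - real p powi P) * (\<Sum>k=1..multiplicity p d. real p powr (real k * r)))"
    by (simp add: Z_def factor cong: prod.cong)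
  ultimately show ?thesis
    by (simp only:)
qed

lemma has_sum_Bset_power_sum_hurwitz:
  assumes "0 < d" "P \<le> -2" "r + real_of_int P < -1"
  shows "((\<lambda>c. real c powr (r + real_of_int P) * Bset_power_sum c d n P) has_sum
           real d powr (r + 2 * real_of_int P) *
           (\<Sum>c'\<in>{c'. 0 < c' \<and> c' \<le> d \<and> int (gcd c' d) dvd n}.
              hurwitz_zeta_real (- r - real_of_int P) (real c' / real d) / real (gcd c' d) powi P *
              (\<Sum>\<^sub>\<infinity>m::int. (real_of_int m + u_cd c' d n) powi P)))
         {1..}"
proof -
  let ?s = "r + real_of_int P"
  let ?T = "\<lambda>c'. hurwitz_zeta_real (- r - real_of_int P) (real c' / real d) / real (gcd c' d) powi P *
              (\<Sum>\<^sub>\<infinity>m::int. (real_of_int m + u_cd c' d n) powi P)"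
  have termwise: "Bset_power_sum c' d n P * (real d powr ?s * hurwitz_zeta_real (- ?s) (real c' / real d))
      = (if int (gcd c' d) dvd n then real d powr (r + 2 * real_of_int P) * ?T c' else 0)" for c'
  proof (cases "int (gcd c' d) dvd n")
    case True
    have "real d powr ?s * real d powi P = real d powr (r + 2 * real_of_int P)"
      using assms(1) by (simp add: powr_real_of_int'[symmetric] powr_add[symmetric] add_ac)
    with True show ?thesis
      using Bset_power_sum_eq[OF assms(1,2) bstar_in_Bset[OF True]] assms(1)
      by (simp add: u_cd_def power_int_divide_distrib algebra_simps)
  qed (simp add: Bset_power_sum_eq_0)
  have "(\<Sum>c'\<in>{1..d}. if int (gcd c' d) dvd n then real d powr (r + 2 * real_of_int P) * ?T c' else 0)
      = real d powr (r + 2 * real_of_int P) * (\<Sum>c'\<in>{c'. 0 < c' \<and> c' \<le> d \<and> int (gcd c' d) dvd n}. ?T c')"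
  proof -
    have "{c'. 0 < c' \<and> c' \<le> d \<and> int (gcd c' d) dvd n} = {c' \<in> {1..d}. int (gcd c' d) dvd n}"
      by auto
    then show ?thesis
      by (simp only: sum.inter_filter[symmetric] sum_distrib_left finite_atLeastAtMost)
  qed
  moreover have "((\<lambda>c. real c powr ?s * Bset_power_sum c d n P) has_sum
      (\<Sum>c'\<in>{1..d}. Bset_power_sum c' d n P * (real d powr ?s * hurwitz_zeta_real (- ?s) (real c' / real d))))
      {1..}"
    using assms by (intro has_sum_powr_periodic Bset_power_sum_cong_mod) auto
  ultimately show ?thesis
    unfolding termwise by (simp only:)
qed

lemma has_sum_Bset_power_sum_closed_form:
  assumes "0 < d" "P \<le> -2" "r + real_of_int P < -1"
  shows "((\<lambda>c. real c powr (r + real_of_int P) * Bset_power_sum c d n P) has_sum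
           (if int d dvd n then
              2 * real d powi P * (if even P then 1 else 0) *
              riemann_zeta_real (real_of_int (- P)) * riemann_zeta_real (- r - real_of_int P) *
              (\<Prod>p\<in>prime_factors d.
                 1 + (1 - real p powi P) * (\<Sum>k=1..multiplicity p d. real p powr (real k * r)))
            else
              real d powr (r + 2 * real_of_int P) *
              (\<Sum>c'\<in>{c'. 0 < c' \<and> c' \<le> d \<and> int (gcd c' d) dvd n}.
                 hurwitz_zeta_real (- r - real_of_int P) (real c' / real d) / real (gcd c' d) powi P *
                 (\<Sum>\<^sub>\<infinity>m::int. (real_of_int m + u_cd c' d n) powi P))))
         {1..}"
  using assms has_sum_Bset_power_sum_dvd has_sum_Bset_power_sum_hurwitz by simp

theorem lemma3p1:
  fixes r2 :: real
  shows "\<exists>P0::int. \<forall>(n::int) (d::nat) (P::int). n \<noteq> 0 \<longrightarrow> 0 < d \<longrightarrow> P \<le> P0 \<longrightarrow>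
     (\<forall>c::nat. 0 < c \<longrightarrow>
        (\<lambda>(a, b). real_of_int (b * int c) powi P) summable_on inner_pairs c d n) \<and>
     ((\<lambda>c::nat. real c powr r2 *
         (\<Sum>\<^sub>\<infinity>(a, b)\<in>inner_pairs c d n. real_of_int (b * int c) powi P))
      has_sum
       ((-1::real) powi (P + 1) * real_of_int n powi P * divisor_sigma r2 n +
        (if int d dvd n then
           2 * real d powi P * (if even P then 1 else 0) *
           riemann_zeta_real (real_of_int (- P)) * riemann_zeta_real (- r2 - real_of_int P) *
           (\<Prod>p\<in>prime_factors d.
              1 + (1 - real p powi P) * (\<Sum>k=1..multiplicity p d. real p powr (real k * r2)))
         else
           real d powr (r2 + 2 * real_of_int P) *
           (\<Sum>c'\<in>{c'. 0 < c' \<and> c' \<le> d \<and> int (gcd c' d) dvd n}.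
              hurwitz_zeta_real (- r2 - real_of_int P) (real c' / real d) /
                real (gcd c' d) powi P *
              (\<Sum>\<^sub>\<infinity>m::int. (real_of_int m + u_cd c' d n) powi P))))
      ) {1..}"
proof -
  have exponent: "P \<le> -2" "r2 + real_of_int P < -1" if "P \<le> min (-2) (-2 - \<lceil>r2\<rceil>)" for P :: int
    using that le_of_int_ceiling[of r2] by linarith+
  show ?thesis
    by (intro exI[of _ "min (-2) (-2 - \<lceil>r2\<rceil>)"] allI impI conjI has_sum_imp_summable[OF has_sum_inner_pairs]
        has_sum_weighted_inner_sums has_sum_Bset_power_sum_closed_form exponent)
qed

end
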